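(* Let $n\ge 2$ and $1\le m\le n$ be integers, and let $\mathbf g_1,\dots,\mathbf g_n\in\mathbb R^d$ be arbitrary vectors (the per-example negative gradients $\mathbf g_i=-\nabla_{\mathbf w} f_i(\mathbf w)$ at a fixed parameter $\mathbf w$). Put $\mathbf g=\frac1n\sum_{i=1}^n \mathbf g_i$ and assume $\mathbf g\neq 0$. Let $\mathbb I$ be a subset of $\{1,\dots,n\}$ of size $m$ drawn uniformly at random among all $\binom nm$ such subsets, and let $\hat{\mathbf g}=\frac1m\sum_{i\in\mathbb I}\mathbf g_i$. Let $\gamma=\max_{i,j\in\{1,\dots,n\}}|\langle \mathbf g_i,\mathbf g_j\rangle|$. Then $$0\le \mathbb E\|\hat{\mathbf g}\|-\|\mathbf g\|\le \frac{2(n-m)}{m(n-1)}\cdot\frac{\gamma}{\mathbb E\|\hat{\mathbf g}\|+\|\mathbf g\|}\le \frac{(n-m)\gamma}{m(n-1)\|\mathbf g\|},$$ $$\mathrm{Var}(\|\hat{\mathbf g}\|)\le \frac{2(n-m)}{m(n-1)}\gamma,$$ and consequently $$\frac{\sqrt{\mathrm{Var}(\|\hat{\mathbf g}\|)}}{\mathbb E\|\hat{\mathbf g}\|}\le\sqrt{\frac{2(n-m)}{m(n-1)}\cdot\frac{\gamma}{\|\mathbf g\|^2}}.$$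
   Context: $\|\cdot\|$ is the Euclidean norm and $\langle\cdot,\cdot\rangle$ the Euclidean inner product on $\mathbb R^d$. Expectation and variance are over the random choice of $\mathbb I$. *)

theory Defs
  imports "HOL-Analysis.Analysis" "HOL-Probability.Probability"
begin

definition batches :: "nat \<Rightarrow> nat \<Rightarrow> nat set set" where
  "batches n m = {I. I \<subseteq> {1..n} \<and> card I = m}"

definition full_grad :: "nat \<Rightarrow> (nat \<Rightarrow> 'a::real_vector) \<Rightarrow> 'a" where
  "full_grad n g = (1 / real n) *\<^sub>R (\<Sum>i=1..n. g i)"

definition batch_grad :: "nat \<Rightarrow> (nat \<Rightarrow> 'a::real_vector) \<Rightarrow> nat set \<Rightarrow> 'a" where
  "batch_grad m g I = (1 / real m) *\<^sub>R (\<Sum>i\<in>I. g i)"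

definition grad_gamma :: "nat \<Rightarrow> (nat \<Rightarrow> 'a::real_inner) \<Rightarrow> real" where
  "grad_gamma n g = Max {\<bar>inner (g i) (g j)\<bar> | i j. i \<in> {1..n} \<and> j \<in> {1..n}}"

end

theory Submission
  imports Defs
begin

text \<open>
  A uniformly random m-subset contains a fixed index with probability m/n and a fixed pair of
  distinct indices with probability m(m-1)/(n(n-1)). Hence the mini-batch gradient is unbiased,
  so \<open>\<parallel>g\<parallel> \<le> E\<parallel>g\<^sub>I\<parallel>\<close> by convexity of the norm, while \<open>E\<parallel>g\<^sub>I\<parallel>\<^sup>2\<close> exceeds \<open>\<parallel>g\<parallel>\<^sup>2\<close> by at most
  (n-m)/(m(n-1)) times the mean of the \<open>\<parallel>g\<^sub>i\<parallel>\<^sup>2\<close>, which is at most \<open>\<gamma>\<close>. Every claimed bound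
  then follows from \<open>Var = E\<parallel>g\<^sub>I\<parallel>\<^sup>2 - (E\<parallel>g\<^sub>I\<parallel>)\<^sup>2\<close> and
  \<open>(E\<parallel>g\<^sub>I\<parallel> - \<parallel>g\<parallel>)(E\<parallel>g\<^sub>I\<parallel> + \<parallel>g\<parallel>) \<le> E\<parallel>g\<^sub>I\<parallel>\<^sup>2 - \<parallel>g\<parallel>\<^sup>2\<close>.
\<close>

lemma card_subsets_containing:
  assumes "finite A" "U \<subseteq> A" "card U \<le> k"
  shows "card {I. I \<subseteq> A \<and> card I = k \<and> U \<subseteq> I} = (card A - card U) choose (k - card U)"
proof -
  have "finite U" using assms finite_subset by blast
  have "{I. I \<subseteq> A \<and> card I = k \<and> U \<subseteq> I} = (\<lambda>J. J \<union> U) ` {J. J \<subseteq> A - U \<and> card J = k - card U}"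
  proof (intro set_eqI iffI)
    fix I assume I: "I \<in> {I. I \<subseteq> A \<and> card I = k \<and> U \<subseteq> I}"
    then have "card (I - U) = k - card U" "I = (I - U) \<union> U"
      using \<open>finite U\<close> assms(1) finite_subset by (auto simp: card_Diff_subset)
    then show "I \<in> (\<lambda>J. J \<union> U) ` {J. J \<subseteq> A - U \<and> card J = k - card U}"
      using I by blast
  next
    fix I assume "I \<in> (\<lambda>J. J \<union> U) ` {J. J \<subseteq> A - U \<and> card J = k - card U}"
    then obtain J where J: "J \<subseteq> A - U" "card J = k - card U" "I = J \<union> U" by auto
    moreover have "J \<inter> U = {}" "finite J" using J(1) assms(1) finite_subset by auto
    ultimately have "card I = k" using \<open>finite U\<close> assms(3) by (simp add: card_Un_disjoint)
    then show "I \<in> {I. I \<subseteq> A \<and> card I = k \<and> U \<subseteq> I}" using J assms by auto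
  qed
  also have "card \<dots> = card {J. J \<subseteq> A - U \<and> card J = k - card U}"
    by (rule card_image) (auto intro!: inj_onI)
  also have "\<dots> = card (A - U) choose (k - card U)" using assms by (simp add: n_subsets)
  finally show ?thesis using assms \<open>finite U\<close> by (simp add: card_Diff_subset)
qed

lemma sum_sum_eq_sum_card_scaleR:
  fixes f :: "'b \<Rightarrow> 'c::real_vector"
  assumes "finite B" "finite C" "\<And>I. I \<in> B \<Longrightarrow> \<sigma> I \<subseteq> C"
  shows "(\<Sum>I\<in>B. \<Sum>x\<in>\<sigma> I. f x) = (\<Sum>x\<in>C. real (card {I\<in>B. x \<in> \<sigma> I}) *\<^sub>R f x)"
proof -
  have "(\<Sum>I\<in>B. \<Sum>x\<in>\<sigma> I. f x) = (\<Sum>I\<in>B. \<Sum>x\<in>{x\<in>C. x \<in> \<sigma> I}. f x)"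
  proof (rule sum.cong[OF refl])
    fix I assume "I \<in> B"
    then have "{x\<in>C. x \<in> \<sigma> I} = \<sigma> I" using assms(3) by blast
    then show "(\<Sum>x\<in>\<sigma> I. f x) = (\<Sum>x\<in>{x\<in>C. x \<in> \<sigma> I}. f x)" by simp
  qed
  also have "\<dots> = (\<Sum>x\<in>C. \<Sum>I\<in>{I\<in>B. x \<in> \<sigma> I}. f x)"
    using assms(1,2) by (rule sum.swap_restrict)
  finally show ?thesis by (simp add: sum_constant_scaleR)
qed

lemma card_subsets_containing_elem:
  assumes "finite A" "i \<in> A"
  shows "real (card A) * card {I\<in>{I. I \<subseteq> A \<and> card I = m}. i \<in> I}
       = real m * card {I. I \<subseteq> A \<and> card I = m}"
proof (cases "m = 0")
  case False
  have "{I\<in>{I. I \<subseteq> A \<and> card I = m}. i \<in> I} = {I. I \<subseteq> A \<and> card I = m \<and> {i} \<subseteq> I}" by auto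
  then have "card {I\<in>{I. I \<subseteq> A \<and> card I = m}. i \<in> I} = (card A - 1) choose (m - 1)"
    using card_subsets_containing[of A "{i}" m] assms False by simp
  moreover have "card {I. I \<subseteq> A \<and> card I = m} = card A choose m"
    using n_subsets[OF assms(1)] by simp
  moreover have "m * (card A choose m) = card A * ((card A - 1) choose (m - 1))"
    using False by (simp add: times_binomial_minus1_eq)
  ultimately show ?thesis by (metis of_nat_mult)
next
  case True
  have "{I\<in>{I. I \<subseteq> A \<and> card I = m}. i \<in> I} = {}"
    using True assms(1) finite_subset by fastforce
  then show ?thesis using True by (simp only: card.empty of_nat_0 mult_zero_left mult_zero_right)
qed

lemma card_subsets_containing_pair:
  assumes "finite A" "i \<in> A" "j \<in> A" "i \<noteq> j"
  shows "real (card A) * (real (card A) - 1) * card {I\<in>{I. I \<subseteq> A \<and> card I = m}. i \<in> I \<and> j \<in> I}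
       = real m * (real m - 1) * card {I. I \<subseteq> A \<and> card I = m}"
proof (cases "m \<ge> 2")
  case True
  define n where "n = card A"
  have "2 \<le> n"
    using assms card_mono[of A "{i, j}"] unfolding n_def by simp
  have "{I\<in>{I. I \<subseteq> A \<and> card I = m}. i \<in> I \<and> j \<in> I} = {I. I \<subseteq> A \<and> card I = m \<and> {i, j} \<subseteq> I}"
    by auto
  then have "card {I\<in>{I. I \<subseteq> A \<and> card I = m}. i \<in> I \<and> j \<in> I} = (n - 2) choose (m - 2)"
    using card_subsets_containing[of A "{i, j}" m] assms True unfolding n_def by (simp add: numeral_2_eq_2)
  moreover have "card {I. I \<subseteq> A \<and> card I = m} = n choose m"
    using n_subsets[OF assms(1)] unfolding n_def by simp
  moreover have "m * (m - 1) * (n choose m) = n * (n - 1) * ((n - 2) choose (m - 2))"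
  proof -
    have m_choose: "m * (n choose m) = n * ((n - 1) choose (m - 1))"
      using True by (simp add: times_binomial_minus1_eq)
    have m1_choose: "(m - 1) * ((n - 1) choose (m - 1)) = (n - 1) * ((n - 2) choose (m - 2))"
      using times_binomial_minus1_eq[of "m - 1" "n - 1"] True by (simp add: diff_diff_add numeral_2_eq_2)
    have "m * (m - 1) * (n choose m) = (m - 1) * (m * (n choose m))" by (simp only: mult_ac)
    also have "\<dots> = n * ((m - 1) * ((n - 1) choose (m - 1)))" unfolding m_choose by (simp only: mult_ac)
    also have "\<dots> = n * (n - 1) * ((n - 2) choose (m - 2))" unfolding m1_choose by (simp only: mult_ac)
    finally show ?thesis .
  qed
  ultimately have "real (m * (m - 1) * card {I. I \<subseteq> A \<and> card I = m})
      = real (n * (n - 1) * card {I\<in>{I. I \<subseteq> A \<and> card I = m}. i \<in> I \<and> j \<in> I})"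
    by simp
  then show ?thesis
    using True \<open>2 \<le> n\<close> unfolding n_def by simp
next
  case False
  have "card I \<ge> 2" if "i \<in> I" "j \<in> I" "finite I" for I
    using that assms(4) card_mono[of I "{i, j}"] by simp
  then have "{I\<in>{I. I \<subseteq> A \<and> card I = m}. i \<in> I \<and> j \<in> I} = {}"
    using False assms(1) finite_subset by fastforce
  moreover have "real m * (real m - 1) = 0" using False by (cases m) auto
  ultimately show ?thesis by (simp only: card.empty of_nat_0 mult_zero_left mult_zero_right)
qed

lemma finite_subsets_of_card:
  "finite A \<Longrightarrow> finite {I. I \<subseteq> A \<and> card I = m}"
  by (rule finite_subset[of _ "Pow A"]) auto

lemma sum_subsets_sum:
  fixes v :: "'b \<Rightarrow> 'a::real_vector"
  assumes "finite A"
  shows "real (card A) *\<^sub>R (\<Sum>I\<in>{I. I \<subseteq> A \<and> card I = m}. \<Sum>i\<in>I. v i)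
       = (real m * card {I. I \<subseteq> A \<and> card I = m}) *\<^sub>R (\<Sum>i\<in>A. v i)"
proof -
  let ?B = "{I. I \<subseteq> A \<and> card I = m}"
  have "real (card A) *\<^sub>R (\<Sum>I\<in>?B. \<Sum>i\<in>I. v i)
      = (\<Sum>i\<in>A. (real (card A) * card {I\<in>?B. i \<in> I}) *\<^sub>R v i)"
    using assms finite_subsets_of_card[OF assms]
    by (subst sum_sum_eq_sum_card_scaleR[where C = A]) (auto simp: scaleR_sum_right)
  also have "\<dots> = (\<Sum>i\<in>A. (real m * card ?B) *\<^sub>R v i)"
    using card_subsets_containing_elem[OF assms] by simp
  finally show ?thesis by (simp add: scaleR_sum_right)
qed

lemma power2_norm_sum_eq_sum_inner:
  fixes v :: "'b \<Rightarrow> 'a::real_inner"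
  shows "(norm (\<Sum>i\<in>I. v i))\<^sup>2 = (\<Sum>p\<in>I \<times> I. inner (v (fst p)) (v (snd p)))"
  unfolding power2_norm_eq_inner inner_sum_left inner_sum_right sum.cartesian_product
  by (rule sum.cong[OF refl]) (auto simp: inner_commute)

lemma card_subsets_containing_fst_snd:
  fixes m :: nat
  assumes "finite A" "p \<in> A \<times> A"
  defines "n \<equiv> real (card A)" and "B \<equiv> {I. I \<subseteq> A \<and> card I = m}"
  shows "n * (n - 1) * card {I\<in>B. p \<in> I \<times> I}
       = real m * card B * ((real m - 1) + (if fst p = snd p then n - real m else 0))"
proof (cases "fst p = snd p")
  case True
  then have "{I\<in>B. p \<in> I \<times> I} = {I\<in>B. fst p \<in> I}" by (auto simp: mem_Times_iff)
  moreover have "n * card {I\<in>B. fst p \<in> I} = real m * card B"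
    using card_subsets_containing_elem[OF assms(1)] assms(2) unfolding n_def B_def by auto
  ultimately have "n * (n - 1) * card {I\<in>B. p \<in> I \<times> I} = real m * card B * (n - 1)"
    by (simp add: mult_ac)
  then show ?thesis using True by simp
next
  case False
  then have "{I\<in>B. p \<in> I \<times> I} = {I\<in>B. fst p \<in> I \<and> snd p \<in> I}" by (auto simp: mem_Times_iff)
  moreover have "n * (n - 1) * card {I\<in>B. fst p \<in> I \<and> snd p \<in> I} = real m * (real m - 1) * card B"
    using card_subsets_containing_pair[OF assms(1)] assms(2) False unfolding n_def B_def by auto
  ultimately show ?thesis using False by (simp add: mult_ac)
qed

lemma sum_Times_diagonal:
  assumes "finite A"
  shows "(\<Sum>p\<in>A \<times> A. if fst p = snd p then f p else 0) = (\<Sum>i\<in>A. f (i, i))"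
proof -
  have "A \<times> A \<inter> {p. fst p = snd p} = (\<lambda>i. (i, i)) ` A" by auto
  then show ?thesis
    using assms by (simp add: sum.If_cases sum.reindex inj_on_def)
qed

lemma sum_subsets_norm_sum_squared:
  fixes v :: "'b \<Rightarrow> 'a::real_inner" and m :: nat
  assumes "finite A"
  defines "n \<equiv> real (card A)" and "B \<equiv> {I. I \<subseteq> A \<and> card I = m}"
  shows "n * (n - 1) * (\<Sum>I\<in>B. (norm (\<Sum>i\<in>I. v i))\<^sup>2)
       = real m * card B * ((real m - 1) * (norm (\<Sum>i\<in>A. v i))\<^sup>2 + (n - real m) * (\<Sum>i\<in>A. (norm (v i))\<^sup>2))"
proof -
  define F where "F p = inner (v (fst p)) (v (snd p))" for p
  have "n * (n - 1) * (\<Sum>I\<in>B. (norm (\<Sum>i\<in>I. v i))\<^sup>2)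
      = (\<Sum>p\<in>A \<times> A. (n * (n - 1) * card {I\<in>B. p \<in> I \<times> I}) * F p)"
    unfolding power2_norm_sum_eq_sum_inner F_def[symmetric]
    using assms(1) finite_subsets_of_card[OF assms(1)] unfolding B_def
    by (subst sum_sum_eq_sum_card_scaleR[where C = "A \<times> A"]) (auto simp: sum_distrib_left mult.assoc)
  also have "\<dots> = real m * card B * ((real m - 1) * (\<Sum>p\<in>A \<times> A. F p)
      + (n - real m) * (\<Sum>p\<in>A \<times> A. if fst p = snd p then F p else 0))"
  proof -
    have "(n * (n - 1) * card {I\<in>B. p \<in> I \<times> I}) * F p
        = real m * card B * ((real m - 1) * F p + (n - real m) * (if fst p = snd p then F p else 0))"
      if "p \<in> A \<times> A" for p
      using card_subsets_containing_fst_snd[OF assms(1) that, of m] unfolding n_def B_def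
      by (simp add: distrib_left distrib_right)
    then show ?thesis by (simp add: sum.distrib flip: sum_distrib_left cong: sum.cong)
  qed
  also have "(\<Sum>p\<in>A \<times> A. if fst p = snd p then F p else 0) = (\<Sum>i\<in>A. (norm (v i))\<^sup>2)"
    using assms(1) by (simp add: sum_Times_diagonal F_def power2_norm_eq_inner)
  also have "(\<Sum>p\<in>A \<times> A. F p) = (norm (\<Sum>i\<in>A. v i))\<^sup>2"
    unfolding power2_norm_sum_eq_sum_inner F_def ..
  finally show ?thesis .
qed

lemma finite_batches: "finite (batches n m)"
  unfolding batches_def by (rule finite_subsets_of_card) simp

lemma card_batches: "card (batches n m) = n choose m"
  unfolding batches_def using n_subsets[of "{1..n}" m] by simp

lemma batches_nonempty: "m \<le> n \<Longrightarrow> batches n m \<noteq> {}"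
  using card_batches[of n m] zero_less_binomial[of m n] by (metis card.empty less_irrefl)

lemma expectation_batches:
  "m \<le> n \<Longrightarrow> measure_pmf.expectation (pmf_of_set (batches n m)) f
    = (\<Sum>I\<in>batches n m. f I) / (n choose m)"
  using batches_nonempty finite_batches by (simp add: integral_pmf_of_set card_batches)

lemma abs_inner_le_grad_gamma:
  assumes "i \<in> {1..n}" "j \<in> {1..n}"
  shows "\<bar>inner (g i) (g j)\<bar> \<le> grad_gamma n g"
  unfolding grad_gamma_def
proof (rule Max_ge)
  have "{\<bar>inner (g i) (g j)\<bar> | i j. i \<in> {1..n} \<and> j \<in> {1..n}}
      = (\<lambda>(i, j). \<bar>inner (g i) (g j)\<bar>) ` ({1..n} \<times> {1..n})" by fastforce
  then show "finite {\<bar>inner (g i) (g j)\<bar> | i j. i \<in> {1..n} \<and> j \<in> {1..n}}" by simp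
qed (use assms in blast)

lemma grad_gamma_nonneg:
  assumes "1 \<le> n"
  shows "0 \<le> grad_gamma n g"
proof -
  have "\<bar>inner (g 1) (g 1)\<bar> \<le> grad_gamma n g"
    using assms by (intro abs_inner_le_grad_gamma) auto
  then show ?thesis by (rule order_trans[OF abs_ge_zero])
qed

lemma norm_full_grad_le_expectation:
  fixes g :: "nat \<Rightarrow> 'a::real_normed_vector"
  assumes "1 \<le> m" "m \<le> n"
  shows "norm (full_grad n g)
       \<le> measure_pmf.expectation (pmf_of_set (batches n m)) (\<lambda>I. norm (batch_grad m g I))"
proof -
  define N where "N = real (n choose m)"
  have "N > 0" using assms unfolding N_def by simp
  have sum_batches: "real n *\<^sub>R (\<Sum>I\<in>batches n m. \<Sum>i\<in>I. g i) = (real m * N) *\<^sub>R (\<Sum>i=1..n. g i)"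
    using sum_subsets_sum[of "{1..n}" g m] n_subsets[of "{1..n}" m]
    unfolding batches_def N_def by simp
  have "(\<Sum>I\<in>batches n m. batch_grad m g I)
      = (1 / (real m * real n)) *\<^sub>R (real n *\<^sub>R (\<Sum>I\<in>batches n m. \<Sum>i\<in>I. g i))"
    using assms unfolding batch_grad_def by (simp add: scaleR_sum_right)
  also have "\<dots> = N *\<^sub>R full_grad n g"
    using assms unfolding sum_batches full_grad_def by simp
  finally have "(\<Sum>I\<in>batches n m. batch_grad m g I) = N *\<^sub>R full_grad n g" .
  then have "N * norm (full_grad n g) \<le> (\<Sum>I\<in>batches n m. norm (batch_grad m g I))"
    using \<open>N > 0\<close> norm_sum[of "batch_grad m g" "batches n m"] by simp
  then show ?thesis
    using \<open>N > 0\<close> assms(2) unfolding expectation_batches[OF assms(2)] N_def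
    by (simp add: pos_le_divide_eq mult.commute)
qed

lemma expectation_norm_batch_grad_squared:
  fixes g :: "nat \<Rightarrow> 'a::real_inner"
  assumes "2 \<le> n" "1 \<le> m" "m \<le> n"
  defines "Q \<equiv> measure_pmf.expectation (pmf_of_set (batches n m)) (\<lambda>I. (norm (batch_grad m g I))\<^sup>2)"
  shows "real m * (real n - 1) * (Q - (norm (full_grad n g))\<^sup>2)
       = (real n - real m) * ((\<Sum>i=1..n. (norm (g i))\<^sup>2) / real n - (norm (full_grad n g))\<^sup>2)"
proof -
  define N where "N = real (n choose m)"
  define S where "S = (\<Sum>i=1..n. g i)"
  define X where "X = (real m - 1) * (norm S)\<^sup>2 + (real n - real m) * (\<Sum>i=1..n. (norm (g i))\<^sup>2)"
  define T where "T = (\<Sum>I\<in>batches n m. (norm (\<Sum>i\<in>I. g i))\<^sup>2)"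
  have "N > 0" "real n > 1" "real m > 0" using assms unfolding N_def by auto
  have "real n * (real n - 1) * T = real m * N * X"
    using sum_subsets_norm_sum_squared[of "{1..n}" g m] n_subsets[of "{1..n}" m]
    unfolding batches_def N_def X_def S_def T_def by simp
  moreover have "T = (real m)\<^sup>2 * N * Q"
    unfolding Q_def expectation_batches[OF assms(3)] batch_grad_def T_def N_def[symmetric]
    using \<open>real m > 0\<close> \<open>N > 0\<close> by (simp add: power_mult_distrib power_divide flip: sum_divide_distrib)
  ultimately have "real m * N * (real m * real n * (real n - 1) * Q) = real m * N * X"
    by (simp add: power2_eq_square mult_ac)
  then have "X = real m * real n * (real n - 1) * Q"
    using \<open>N > 0\<close> \<open>real m > 0\<close> by (subst (asm) mult_left_cancel) auto
  then have "real m * (real n - 1) * Q = X / real n"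
    using \<open>real n > 1\<close> by (simp add: field_simps)
  moreover have "(norm (full_grad n g))\<^sup>2 = (norm S)\<^sup>2 / (real n)\<^sup>2"
    unfolding full_grad_def S_def by (simp add: power_divide)
  ultimately show ?thesis
    using \<open>real n > 1\<close> unfolding X_def by (simp add: field_simps power2_eq_square)
qed

lemma expectation_norm_batch_grad_squared_le:
  fixes g :: "nat \<Rightarrow> 'a::real_inner"
  assumes "2 \<le> n" "1 \<le> m" "m \<le> n"
  shows "measure_pmf.expectation (pmf_of_set (batches n m)) (\<lambda>I. (norm (batch_grad m g I))\<^sup>2)
         - (norm (full_grad n g))\<^sup>2
       \<le> (real n - real m) / (real m * (real n - 1)) * grad_gamma n g"
proof -
  have "(\<Sum>i=1..n. (norm (g i))\<^sup>2) \<le> (\<Sum>i=1..n. grad_gamma n g)"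
  proof (rule sum_mono)
    fix i assume i: "i \<in> {1..n}"
    have "\<bar>inner (g i) (g i)\<bar> \<le> grad_gamma n g" by (rule abs_inner_le_grad_gamma[OF i i])
    then show "(norm (g i))\<^sup>2 \<le> grad_gamma n g" by (simp add: power2_norm_eq_inner)
  qed
  then have "(\<Sum>i=1..n. (norm (g i))\<^sup>2) / real n \<le> grad_gamma n g"
    using assms(1) by (simp add: field_simps)
  then have "(\<Sum>i=1..n. (norm (g i))\<^sup>2) / real n - (norm (full_grad n g))\<^sup>2 \<le> grad_gamma n g"
    using zero_le_power2[of "norm (full_grad n g)"] by linarith
  then have "real m * (real n - 1) * (measure_pmf.expectation (pmf_of_set (batches n m))
        (\<lambda>I. (norm (batch_grad m g I))\<^sup>2) - (norm (full_grad n g))\<^sup>2)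
      \<le> (real n - real m) * grad_gamma n g"
    unfolding expectation_norm_batch_grad_squared[OF assms]
    using assms(3) by (intro mult_left_mono) auto
  then show ?thesis
    using assms by (simp add: field_simps)
qed

lemma mean_variance_bounds:
  fixes E a Q V b :: real
  assumes "0 < a" "a \<le> E" "V = Q - E\<^sup>2" "0 \<le> V" "Q - a\<^sup>2 \<le> b / 2" "0 \<le> b"
  shows "0 \<le> E - a \<and> E - a \<le> b / (E + a) \<and> b / (E + a) \<le> b / (2 * a)
     \<and> V \<le> b \<and> sqrt V / E \<le> sqrt (b / a\<^sup>2)"
proof -
  have "a\<^sup>2 \<le> E\<^sup>2" using assms(1,2) by (simp add: power_mono)
  then have "V \<le> b" using assms by linarith
  have "(E - a) * (E + a) \<le> b" using assms by (simp add: power2_eq_square algebra_simps)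
  then have "E - a \<le> b / (E + a)" using assms(1,2) by (simp add: pos_le_divide_eq)
  moreover have "b / (E + a) \<le> b / (2 * a)" using assms by (intro divide_left_mono) auto
  moreover have "sqrt V / E \<le> sqrt (b / a\<^sup>2)"
  proof -
    have "sqrt V / E \<le> sqrt V / a" using assms by (intro divide_left_mono) auto
    also have "\<dots> = sqrt (V / a\<^sup>2)" using assms(1) by (simp add: real_sqrt_divide)
    also have "\<dots> \<le> sqrt (b / a\<^sup>2)" using \<open>V \<le> b\<close> by (intro real_sqrt_le_mono divide_right_mono) auto
    finally show ?thesis .
  qed
  ultimately show ?thesis using \<open>V \<le> b\<close> assms(2) by auto
qed

theorem theorem1:
  fixes n m :: nat and g :: "nat \<Rightarrow> 'a::euclidean_space"
  assumes "n \<ge> 2" and "1 \<le> m" and "m \<le> n"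
    and "full_grad n g \<noteq> 0"
  defines "E \<equiv> measure_pmf.expectation (pmf_of_set (batches n m)) (\<lambda>I. norm (batch_grad m g I))"
    and "V \<equiv> measure_pmf.variance (pmf_of_set (batches n m)) (\<lambda>I. norm (batch_grad m g I))"
    and "\<gamma> \<equiv> grad_gamma n g"
    and "c \<equiv> 2 * real (n - m) / (real m * real (n - 1))"
  shows "0 \<le> E - norm (full_grad n g)
       \<and> E - norm (full_grad n g) \<le> c * \<gamma> / (E + norm (full_grad n g))
       \<and> c * \<gamma> / (E + norm (full_grad n g))
           \<le> real (n - m) * \<gamma> / (real m * real (n - 1) * norm (full_grad n g))
       \<and> V \<le> c * \<gamma>
       \<and> sqrt V / E \<le> sqrt (c * (\<gamma> / (norm (full_grad n g))\<^sup>2))"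
proof -
  define Q where "Q = measure_pmf.expectation (pmf_of_set (batches n m)) (\<lambda>I. (norm (batch_grad m g I))\<^sup>2)"
  define \<kappa> where "\<kappa> = (real n - real m) / (real m * (real n - 1))"
  have "c = 2 * \<kappa>"
    using assms(1,3) unfolding c_def \<kappa>_def by simp
  then have c_half: "c * \<gamma> / 2 = \<kappa> * \<gamma>" by simp
  have "finite (set_pmf (pmf_of_set (batches n m)))"
    using batches_nonempty[OF assms(3)] finite_batches by simp
  have "0 < norm (full_grad n g)" using assms(4) by simp
  moreover have "norm (full_grad n g) \<le> E"
    unfolding E_def by (rule norm_full_grad_le_expectation[OF assms(2,3)])
  moreover have "V = Q - E\<^sup>2"
    unfolding V_def E_def Q_def
    by (intro measure_pmf.variance_eq integrable_measure_pmf_finite \<open>finite (set_pmf _)\<close>)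
  moreover have "0 \<le> V" unfolding V_def by (rule measure_pmf.variance_positive)
  moreover have "Q - (norm (full_grad n g))\<^sup>2 \<le> c * \<gamma> / 2"
    unfolding c_half unfolding Q_def \<gamma>_def \<kappa>_def
    by (rule expectation_norm_batch_grad_squared_le[OF assms(1-3)])
  moreover have "0 \<le> c * \<gamma>"
    using grad_gamma_nonneg[of n g] assms(1) unfolding c_def \<gamma>_def by simp
  ultimately have "0 \<le> E - norm (full_grad n g)
      \<and> E - norm (full_grad n g) \<le> c * \<gamma> / (E + norm (full_grad n g))
      \<and> c * \<gamma> / (E + norm (full_grad n g)) \<le> c * \<gamma> / (2 * norm (full_grad n g))
      \<and> V \<le> c * \<gamma> \<and> sqrt V / E \<le> sqrt (c * \<gamma> / (norm (full_grad n g))\<^sup>2)"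
    by (rule mean_variance_bounds)
  then show ?thesis unfolding c_def by simp
qed

end
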